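(* Let $i,j,k$ be integers with $j>0$ and $0\le k<i$, and suppose the virtual diagram $(i,j,k)$ has one component. Let $GD((i,j,k))$ be its Gauss diagram. Then $i(c)\neq 0$ for every chord $c$ of $GD((i,j,k))$.
   Context: Braid conventions: braids on $i$ strands are drawn horizontally, oriented left to right, with positions $1,\dots,i$ numbered from top to bottom, and words are read left to right. The generator $\sigma_m$ is a classical (positive) crossing at which the strand in position $m$ moves to position $m+1$, passing over the strand moving from position $m+1$ to position $m$. Virtual crossings carry no over/under information. $VB^1_{i,j}$ is obtained from $(\sigma_1\cdots\sigma_{i-1})^j$ by replacing the crossings of the first (left-most) block $\sigma_1\cdots\sigma_{i-1}$ by virtual crossings. $B_k=\sigma_k\cdots\sigma_1$, with $B_0$ trivial. $(i,j,k)$ is the closure of $VB^1_{i,j}B_k$. Gauss diagram: for an oriented virtual knot diagram, take a circle $\Gamma$ parametrizing the knot. Each classical crossing gives a chord joining its two preimages, with an arrowhead at the under-passage and labelled by the crossing sign; virtual crossings are ignored. A crossing is positive ($+1$) if the understrand passes from the right to the left of the overstrand, and negative ($-1$) otherwise. For a chord $c$, its endpoints split $\Gamma$ into open arcs $\gamma_1,\gamma_2$. Flip every chord $c'\neq c$ with one endpoint on each arc whose arrowhead lies on $\gamma_2$; flipping reverses the arrow and negates the sign. Then $i(c)$ is the sum of signs of all chords with one endpoint on each of $\gamma_1,\gamma_2$. This is well defined up to sign. *)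

theory Defs
  imports Main
begin

(* A braid letter: a classical positive crossing sigma_m or a virtual crossing at
   positions m, m+1 (positions numbered 1..i from top to bottom). *)
datatype letter = Cl nat | Vi nat

fun lpos :: "letter \<Rightarrow> nat" where
  "lpos (Cl m) = m" | "lpos (Vi m) = m"

fun is_Cl :: "letter \<Rightarrow> bool" where
  "is_Cl (Cl m) = True" | "is_Cl (Vi m) = False"

fun crossing_sign :: "letter \<Rightarrow> int" where
  "crossing_sign (Cl m) = 1" | "crossing_sign (Vi m) = 0"

definition step :: "letter \<Rightarrow> nat \<Rightarrow> nat" where
  "step l p = (if p = lpos l then lpos l + 1 else if p = lpos l + 1 then lpos l else p)"

definition braid_perm :: "letter list \<Rightarrow> nat \<Rightarrow> nat" where
  "braid_perm w p = fold step w p"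

definition one_component :: "nat \<Rightarrow> letter list \<Rightarrow> bool" where
  "one_component n w \<longleftrightarrow> (\<forall>p\<in>{1..n}. \<exists>r. (braid_perm w ^^ r) 1 = p)"

(* events met by a strand entering the word at position p; letters indexed from t.
   (t, True) = over-passage of classical crossing t, (t, False) = under-passage *)
fun pass_ev :: "letter list \<Rightarrow> nat \<Rightarrow> nat \<Rightarrow> (nat \<times> bool) list" where
  "pass_ev [] t p = []"
| "pass_ev (l # ls) t p =
     (case l of
        Cl m \<Rightarrow> (if p = m then [(t, True)] else if p = m + 1 then [(t, False)] else [])
      | Vi m \<Rightarrow> []) @ pass_ev ls (Suc t) (step l p)"

(* parametrisation of the closed curve (circle Gamma), starting at position 1 on the left *)
definition traversal :: "nat \<Rightarrow> letter list \<Rightarrow> (nat \<times> bool) list" where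
  "traversal n w = concat (map (\<lambda>r. pass_ev w 0 ((braid_perm w ^^ r) 1)) [0..<n])"

(* chords of the Gauss diagram = classical crossings, indexed by letter position *)
definition gd_chords :: "letter list \<Rightarrow> nat set" where
  "gd_chords w = {t. t < length w \<and> is_Cl (w ! t)}"

(* point on Gamma of the over-passage (arrow tail) and under-passage (arrow head) *)
definition tail_pos :: "nat \<Rightarrow> letter list \<Rightarrow> nat \<Rightarrow> nat" where
  "tail_pos n w t = (THE x. x < length (traversal n w) \<and> traversal n w ! x = (t, True))"

definition head_pos :: "nat \<Rightarrow> letter list \<Rightarrow> nat \<Rightarrow> nat" where
  "head_pos n w t = (THE x. x < length (traversal n w) \<and> traversal n w ! x = (t, False))"

definition arc :: "nat \<Rightarrow> nat \<Rightarrow> nat \<Rightarrow> nat set" where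
  "arc N a b = {x. x < N \<and> (if a < b then a < x \<and> x < b else (a < x \<or> x < b))}"

definition gd_index :: "nat \<Rightarrow> letter list \<Rightarrow> nat \<Rightarrow> int" where
  "gd_index n w c =
    (let N = length (traversal n w);
         g1 = arc N (tail_pos n w c) (head_pos n w c);
         g2 = arc N (head_pos n w c) (tail_pos n w c)
     in \<Sum>c' \<in> {c' \<in> gd_chords w - {c}.
                 (tail_pos n w c' \<in> g1 \<and> head_pos n w c' \<in> g2) \<or>
                 (tail_pos n w c' \<in> g2 \<and> head_pos n w c' \<in> g1)}.
          crossing_sign (w ! c') * (if head_pos n w c' \<in> g2 then -1 else 1))"

definition VB1 :: "nat \<Rightarrow> nat \<Rightarrow> letter list" where
  "VB1 i j = map Vi [1..<i] @ concat (replicate (j - 1) (map Cl [1..<i]))"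

definition Bk :: "nat \<Rightarrow> letter list" where
  "Bk k = map Cl (rev [1..<k+1])"

definition ijk_word :: "nat \<Rightarrow> nat \<Rightarrow> nat \<Rightarrow> letter list" where
  "ijk_word i j k = VB1 i j @ Bk k"

end

(* Weight each over-passage by -1 and each under-passage by +1. Along a classical crossing a
   strand moves by minus the weight of its passage, and the closure of VB^1_{i,j} B_k is
   traversed strand by strand, each strand starting with the virtual block, which sends
   position 1 to i and every other position p to p - 1. Hence, at a passage on the r-th strand
   of the traversal, the running weight sum is i - r minus the current position of the strand.
   For a chord c, i(c) counts heads minus tails on the arc from the tail of c to its head, a
   difference of two running sums, which works out to a - b, where a and b are the strands
   through the over- and the under-passage of c. These strands differ, so i(c) is nonzero. *)

theory Submission
  imports Defs
begin

lemma distinct_concat_map: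
  assumes "distinct xs" "\<forall>x\<in>set xs. distinct (f x)"
    and "\<forall>x\<in>set xs. \<forall>y\<in>set xs. x \<noteq> y \<longrightarrow> set (f x) \<inter> set (f y) = {}"
  shows "distinct (concat (map f xs))"
  using assms by (induction xs) auto

lemma the_nth_eq:
  assumes "distinct xs" "e \<in> set xs"
  shows "(THE i. i < length xs \<and> xs ! i = e) < length xs \<and>
         xs ! (THE i. i < length xs \<and> xs ! i = e) = e"
  by (rule theI'[OF distinct_Ex1[OF assms]])

lemma nth_concat_split:
  "x < length (concat xss) \<Longrightarrow>
   \<exists>r y. r < length xss \<and> y < length (xss ! r) \<and> concat xss ! x = xss ! r ! y \<and>
         take x (concat xss) = concat (take r xss) @ take y (xss ! r)"
proof (induction xss arbitrary: x)
  case (Cons xs xss)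
  show ?case
  proof (cases "x < length xs")
    case True
    then show ?thesis by (intro exI[of _ 0] exI[of _ x]) (auto simp: nth_append)
  next
    case False
    with Cons.prems have "x - length xs < length (concat xss)" by simp
    from Cons.IH[OF this] obtain r y where "r < length xss" "y < length (xss ! r)"
      "concat xss ! (x - length xs) = xss ! r ! y"
      "take (x - length xs) (concat xss) = concat (take r xss) @ take y (xss ! r)"
      by blast
    with False show ?thesis by (intro exI[of _ "Suc r"] exI[of _ y]) (auto simp: nth_append)
  qed
qed simp

lemma sum_list_take_eq_sum_nth:
  "m \<le> length xs \<Longrightarrow> sum_list (take m xs) = (\<Sum>x<m. xs ! x)"
  by (simp add: sum_list_sum_nth atLeast0LessThan min_absorb1)

lemma
  fixes f :: "'a \<Rightarrow> 'a"
  assumes inj: "inj f" and fin: "finite A" and closed: "f ` A \<subseteq> A" and a: "a \<in> A"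
    and transitive: "\<forall>x\<in>A. \<exists>r. (f ^^ r) a = x"
  shows orbit_bij_betw: "bij_betw (\<lambda>r. (f ^^ r) a) {..<card A} A"
    and funpow_card_orbit: "(f ^^ card A) a = a"
proof -
  let ?P = "\<lambda>r. (f ^^ r) a"
  have in_A: "?P r \<in> A" for r
    by (induction r) (use a closed in auto)
  have distinct: "?P r \<noteq> ?P s" if "r < s" "s < card A" for r s
  proof
    assume eq: "?P r = ?P s"
    define d where "d = s - r"
    have "(f ^^ r) ((f ^^ d) a) = ?P (r + d)" by (simp add: funpow_add)
    also have "\<dots> = (f ^^ r) a" using eq that by (simp add: d_def)
    finally have period: "(f ^^ d) a = a" using inj_fn[OF inj] by (simp add: inj_eq)
    have "A \<subseteq> ?P ` {..<d}"
    proof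
      fix x assume "x \<in> A"
      with transitive obtain m where "?P m = x" by blast
      then have "?P (m mod d) = x" by (simp add: funpow_mod_eq[OF period])
      moreover have "m mod d < d" using that by (simp add: d_def)
      ultimately show "x \<in> ?P ` {..<d}" by blast
    qed
    then have "card A \<le> card (?P ` {..<d})" by (intro card_mono) auto
    also have "\<dots> \<le> d" using card_image_le[of "{..<d}" ?P] by simp
    finally show False using that by (simp add: d_def)
  qed
  have inj_P: "inj_on ?P {..<card A}"
  proof (rule inj_onI)
    fix r s assume "r \<in> {..<card A}" "s \<in> {..<card A}" "?P r = ?P s"
    then show "r = s" using distinct[of r s] distinct[of s r] by (cases r s rule: linorder_cases) auto
  qed
  have image: "?P ` {..<card A} = A"
    by (rule card_subset_eq[OF fin]) (use in_A card_image[OF inj_P] in auto)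
  with inj_P show "bij_betw ?P {..<card A} A" by (simp add: bij_betw_def)
  have "?P (card A) \<in> ?P ` {..<card A}" using in_A image by simp
  then obtain r where r: "r < card A" "?P (card A) = ?P r" by auto
  show "?P (card A) = a"
  proof (cases r)
    case (Suc r')
    have "(f ^^ r) ((f ^^ (card A - r)) a) = ?P (r + (card A - r))" by (simp add: funpow_add)
    also have "\<dots> = (f ^^ r) a" using r by simp
    finally have "?P (card A - r) = ?P 0" using inj_fn[OF inj] by (simp add: inj_eq)
    with distinct[of 0 "card A - r"] r Suc show ?thesis by simp
  qed (use r in simp)
qed

lemma arc_subset: "arc N a b \<subseteq> {..<N}"
  by (auto simp: arc_def)

lemma endpoints_notin_arc: "a \<notin> arc N a b" "b \<notin> arc N a b"
  by (auto simp: arc_def)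

lemma mem_arc_swap_iff:
  "a \<noteq> b \<Longrightarrow> x < N \<Longrightarrow> x \<noteq> a \<Longrightarrow> x \<noteq> b \<Longrightarrow>
   x \<in> arc N b a \<longleftrightarrow> x \<notin> arc N a b"
  by (auto simp: arc_def)

lemma sum_arc_eq_prefix_sums:
  fixes xs :: "'a::ab_group_add list"
  assumes a: "a < length xs" and b: "b < length xs" and "a \<noteq> b" and "sum_list xs = 0"
  shows "(\<Sum>x\<in>arc (length xs) a b. xs ! x) = sum_list (take b xs) - sum_list (take (Suc a) xs)"
proof -
  have split: "(\<Sum>x<m. xs ! x) + (\<Sum>x\<in>{m..<p}. xs ! x) = (\<Sum>x<p. xs ! x)" if "m \<le> p" for m p
    unfolding lessThan_atLeast0 by (rule sum.atLeastLessThan_concat) (use that in auto)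
  show ?thesis
  proof (cases "a < b")
    case True
    then have "arc (length xs) a b = {Suc a..<b}" using b by (auto simp: arc_def)
    with True a b split[of "Suc a" b] show ?thesis
      by (simp add: sum_list_take_eq_sum_nth del: sum.lessThan_Suc) (metis add_diff_cancel_left')
  next
    case False
    with \<open>a \<noteq> b\<close> b have "arc (length xs) a b = {Suc a..<length xs} \<union> {..<b}" by (auto simp: arc_def)
    moreover have "(\<Sum>x<length xs. xs ! x) = 0"
      using \<open>sum_list xs = 0\<close> sum_list_take_eq_sum_nth[of "length xs" xs] by simp
    moreover have "(\<Sum>x\<in>{Suc a..<length xs} \<union> {..<b}. xs ! x) =
                   (\<Sum>x\<in>{Suc a..<length xs}. xs ! x) + (\<Sum>x<b. xs ! x)"
      using False by (intro sum.union_disjoint) auto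
    ultimately show ?thesis using a b split[of "Suc a" "length xs"]
      by (simp add: sum_list_take_eq_sum_nth algebra_simps del: sum.lessThan_Suc)
  qed
qed

subsection \<open>Strand positions and passages\<close>

definition is_braid_word :: "nat \<Rightarrow> letter list \<Rightarrow> bool" where
  "is_braid_word n w \<longleftrightarrow> (\<forall>l\<in>set w. 1 \<le> lpos l \<and> lpos l < n)"

lemma step_step [simp]: "step l (step l p) = p"
  by (auto simp: step_def)

lemma inj_fold_step: "inj (fold step w)"
proof (induction w)
  case (Cons l w)
  have "inj (step l)" by (metis injI step_step)
  with Cons.IH show ?case using inj_compose by (fastforce simp: comp_def)
qed simp

lemma fold_step_in_range:
  assumes "is_braid_word n w" "p \<in> {1..n}"
  shows "fold step w p \<in> {1..n}"
  using assms
proof (induction w arbitrary: p)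
  case (Cons l w)
  then have "step l p \<in> {1..n}" by (auto simp: is_braid_word_def step_def)
  with Cons show ?case by (simp add: is_braid_word_def)
qed simp

lemma bij_betw_fold_step:
  assumes "is_braid_word n w"
  shows "bij_betw (fold step w) {1..n} {1..n}"
proof -
  have "fold step w ` {1..n} \<subseteq> {1..n}" using fold_step_in_range[OF assms] by auto
  moreover have "inj_on (fold step w) {1..n}" using inj_fold_step by (rule inj_on_subset) simp
  ultimately show ?thesis by (simp add: bij_betw_def endo_inj_surj)
qed

lemma fold_step_Vi:
  "1 \<le> a \<Longrightarrow> fold step (map Vi [a..<b]) p =
     (if p = a \<and> a \<le> b then b else if a < p \<and> p \<le> b then p - 1 else p)"
  by (induction b) (auto simp: step_def)

lemma set_pass_ev:
  "(t, b) \<in> set (pass_ev w t0 p) \<longleftrightarrow>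
     t0 \<le> t \<and> t < t0 + length w \<and> is_Cl (w ! (t - t0)) \<and>
     fold step (take (t - t0) w) p = lpos (w ! (t - t0)) + (if b then 0 else 1)"
proof (induction w arbitrary: t0 p)
  case (Cons l w)
  show ?case
  proof (cases "t = t0")
    case True
    with Cons[of "Suc t0"] show ?thesis by (cases l) auto
  next
    case False
    then have "(t, b) \<in> set (pass_ev (l # w) t0 p) \<longleftrightarrow>
               (t, b) \<in> set (pass_ev w (Suc t0) (step l p))"
      by (cases l) auto
    moreover have "t - t0 = Suc (t - Suc t0)" if "t0 < t" using that by simp
    ultimately show ?thesis using Cons[of "Suc t0" "step l p"] False
      by (cases "t0 < t") auto
  qed
qed simp

lemma distinct_pass_ev: "distinct (pass_ev w t0 p)"
proof (induction w arbitrary: t0 p)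
  case (Cons l w)
  have "(t0, b) \<notin> set (pass_ev w (Suc t0) q)" for b q by (simp add: set_pass_ev)
  with Cons show ?case by (cases l) auto
qed simp

lemma pass_ev_Vi_append:
  "pass_ev (map Vi xs @ w) t0 p = pass_ev w (t0 + length xs) (fold step (map Vi xs) p)"
  by (induction xs arbitrary: t0 p) auto

(* minus the displacement of the passing strand at a positive crossing *)
definition passage_weight :: "nat \<times> bool \<Rightarrow> int" where
  "passage_weight e = (if snd e then -1 else 1)"

lemma passage_weight_simps [simp]:
  "passage_weight (t, True) = -1" "passage_weight (t, False) = 1"
  by (simp_all add: passage_weight_def)

lemma sum_passage_weight_pass_ev:
  "\<forall>l\<in>set w. is_Cl l \<Longrightarrow>
   sum_list (map passage_weight (pass_ev w t0 p)) = int p - int (fold step w p)"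
proof (induction w arbitrary: t0 p)
  case (Cons l w)
  then obtain m where "l = Cl m" by (cases l) auto
  with Cons show ?case by (auto simp: step_def)
qed simp

lemma sum_passage_weight_take_pass_ev:
  assumes "\<forall>l\<in>set w. is_Cl l" "y < length (pass_ev w t0 p)" "pass_ev w t0 p ! y = (t, b)"
  shows "sum_list (map passage_weight (take y (pass_ev w t0 p))) =
         int p - (int (lpos (w ! (t - t0))) + (if b then 0 else 1))"
  using assms
proof (induction w arbitrary: t0 p y)
  case (Cons l w)
  then obtain m where l: "l = Cl m" by (cases l) auto
  let ?L = "pass_ev w (Suc t0) (step l p)"
  have nth_shift: "(l # w) ! (t - t0) = w ! (t - Suc t0)" if "(t, b) \<in> set ?L"
    using that by (simp add: set_pass_ev Suc_diff_Suc)
  show ?case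
  proof (cases "p = m \<or> p = m + 1")
    case True
    show ?thesis
    proof (cases y)
      case 0
      with Cons.prems l True show ?thesis by auto
    next
      case (Suc y')
      with Cons.prems l True have y': "y' < length ?L" "?L ! y' = (t, b)" by auto
      with Cons.IH[OF _ y'] Cons.prems nth_shift[OF nth_mem[OF y'(1), unfolded y'(2)]]
      show ?thesis using True l Suc by (auto simp: step_def)
    qed
  next
    case False
    then have L: "pass_ev (l # w) t0 p = ?L" "step l p = p" using l by (auto simp: step_def)
    with Cons.prems have y: "y < length ?L" "?L ! y = (t, b)" by auto
    with Cons.IH[OF _ y] Cons.prems L nth_shift[OF nth_mem[OF y(1), unfolded y(2)]]
    show ?thesis by simp
  qed
qed simp

subsection \<open>The traversal of a one-component closure\<close>

lemma
  assumes "is_braid_word n w" "one_component n w" "0 < n"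
  shows bij_betw_strand_start: "bij_betw (\<lambda>r. (braid_perm w ^^ r) 1) {..<n} {1..n}"
    and funpow_braid_perm_closes: "(braid_perm w ^^ n) 1 = 1"
proof -
  have "inj (braid_perm w)" using inj_fold_step by (simp add: braid_perm_def[abs_def])
  moreover have "braid_perm w ` {1..n} \<subseteq> {1..n}"
    using fold_step_in_range[OF assms(1)] by (auto simp: braid_perm_def)
  moreover have "\<forall>p\<in>{1..n}. \<exists>r. (braid_perm w ^^ r) 1 = p"
    using assms(2) by (simp add: one_component_def)
  ultimately show "bij_betw (\<lambda>r. (braid_perm w ^^ r) 1) {..<n} {1..n}"
    and "(braid_perm w ^^ n) 1 = 1"
    using orbit_bij_betw[of "braid_perm w" "{1..n}" 1] funpow_card_orbit[of "braid_perm w" "{1..n}" 1]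
      assms(3) by simp_all
qed

lemma
  assumes w: "is_braid_word n w" and oc: "one_component n w" and n: "0 < n"
  shows set_traversal: "set (traversal n w) = gd_chords w \<times> UNIV"
    and distinct_traversal: "distinct (traversal n w)"
proof -
  let ?P = "\<lambda>r. (braid_perm w ^^ r) 1"
  have bij: "bij_betw ?P {..<n} {1..n}" by (rule bij_betw_strand_start[OF w oc n])
  have pass: "(t, b) \<in> set (pass_ev w 0 p) \<longleftrightarrow> t \<in> gd_chords w \<and>
              fold step (take t w) p = lpos (w ! t) + (if b then 0 else 1)" for t b p
    by (auto simp: set_pass_ev gd_chords_def)
  show "set (traversal n w) = gd_chords w \<times> UNIV"
  proof (intro set_eqI iffI)
    fix e assume "e \<in> set (traversal n w)"
    then show "e \<in> gd_chords w \<times> UNIV"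
      unfolding traversal_def set_concat set_map by (cases e) (auto simp: pass)
  next
    fix e :: "nat \<times> bool" assume "e \<in> gd_chords w \<times> UNIV"
    then obtain t b where e: "e = (t, b)" and t: "t \<in> gd_chords w" by auto
    then have "w ! t \<in> set w" by (simp add: gd_chords_def)
    with w have "lpos (w ! t) + (if b then 0 else 1) \<in> {1..n}" by (auto simp: is_braid_word_def)
    moreover have "is_braid_word n (take t w)" using w by (auto simp: is_braid_word_def dest: in_set_takeD)
    ultimately have "lpos (w ! t) + (if b then 0 else 1) \<in> fold step (take t w) ` {1..n}"
      using bij_betw_imp_surj_on[OF bij_betw_fold_step] by blast
    then obtain p where p: "p \<in> {1..n}" "fold step (take t w) p = lpos (w ! t) + (if b then 0 else 1)"
      by auto
    from p(1) have "p \<in> ?P ` {..<n}" using bij_betw_imp_surj_on[OF bij] by blast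
    then obtain r where "r < n" "?P r = p" by auto
    with p have "(t, b) \<in> set (pass_ev w 0 (?P r))" using t by (simp add: pass)
    with \<open>r < n\<close> show "e \<in> set (traversal n w)" unfolding e traversal_def by auto
  qed
  show "distinct (traversal n w)"
    unfolding traversal_def
  proof (rule distinct_concat_map)
    show "\<forall>r\<in>set [0..<n]. \<forall>s\<in>set [0..<n]. r \<noteq> s \<longrightarrow>
            set (pass_ev w 0 (?P r)) \<inter> set (pass_ev w 0 (?P s)) = {}"
    proof (intro ballI impI)
      fix r s assume rs: "r \<in> set [0..<n]" "s \<in> set [0..<n]" "r \<noteq> s"
      have "?P r \<noteq> ?P s"
      proof
        assume "?P r = ?P s"
        from inj_onD[OF bij_betw_imp_inj_on[OF bij] this] rs show False by auto
      qed
      then have neq: "fold step (take t w) (?P r) \<noteq> fold step (take t w) (?P s)" for t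
        using inj_fold_step by (simp add: inj_eq)
      show "set (pass_ev w 0 (?P r)) \<inter> set (pass_ev w 0 (?P s)) = {}"
      proof (rule equals0I)
        fix e assume "e \<in> set (pass_ev w 0 (?P r)) \<inter> set (pass_ev w 0 (?P s))"
        then obtain t b where "(t, b) \<in> set (pass_ev w 0 (?P r))" "(t, b) \<in> set (pass_ev w 0 (?P s))"
          by (cases e) auto
        with neq[of t] show False by (simp add: pass)
      qed
    qed
  qed (simp_all add: distinct_pass_ev)
qed

subsection \<open>The index of a chord\<close>

lemma crossing_sign_chord: "c \<in> gd_chords w \<Longrightarrow> crossing_sign (w ! c) = 1"
  by (cases "w ! c") (auto simp: gd_chords_def)

context
  fixes n :: nat and w :: "letter list"
  assumes distinct: "distinct (traversal n w)"
    and events: "set (traversal n w) = gd_chords w \<times> UNIV"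
begin

lemma tail_pos_nth:
  "c \<in> gd_chords w \<Longrightarrow>
   tail_pos n w c < length (traversal n w) \<and> traversal n w ! tail_pos n w c = (c, True)"
  unfolding tail_pos_def using the_nth_eq[OF distinct, of "(c, True)"] events by simp

lemma head_pos_nth:
  "c \<in> gd_chords w \<Longrightarrow>
   head_pos n w c < length (traversal n w) \<and> traversal n w ! head_pos n w c = (c, False)"
  unfolding head_pos_def using the_nth_eq[OF distinct, of "(c, False)"] events by simp

lemma passage_positions:
  "{..<length (traversal n w)} = tail_pos n w ` gd_chords w \<union> head_pos n w ` gd_chords w"
proof (intro set_eqI iffI)
  fix x assume "x \<in> {..<length (traversal n w)}"
  then have x: "x < length (traversal n w)" by simp
  then obtain c b where c: "traversal n w ! x = (c, b)" "c \<in> gd_chords w"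
    using nth_mem[OF x] events by (cases "traversal n w ! x") auto
  show "x \<in> tail_pos n w ` gd_chords w \<union> head_pos n w ` gd_chords w"
  proof (cases b)
    case True
    with c have "traversal n w ! tail_pos n w c = traversal n w ! x" using tail_pos_nth by simp
    then have "tail_pos n w c = x"
      using nth_eq_iff_index_eq[OF distinct, of "tail_pos n w c" x] tail_pos_nth[OF c(2)] x by simp
    with c show ?thesis by blast
  next
    case False
    with c have "traversal n w ! head_pos n w c = traversal n w ! x" using head_pos_nth by simp
    then have "head_pos n w c = x"
      using nth_eq_iff_index_eq[OF distinct, of "head_pos n w c" x] head_pos_nth[OF c(2)] x by simp
    with c show ?thesis by blast
  qed
next
  fix x assume "x \<in> tail_pos n w ` gd_chords w \<union> head_pos n w ` gd_chords w"
  then obtain c where "c \<in> gd_chords w" "x = tail_pos n w c \<or> x = head_pos n w c" by blast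
  then show "x \<in> {..<length (traversal n w)}" using tail_pos_nth[of c] head_pos_nth[of c] by auto
qed

lemma inj_on_tail_pos: "inj_on (tail_pos n w) (gd_chords w)"
  by (rule inj_onI) (metis Pair_inject tail_pos_nth)

lemma inj_on_head_pos: "inj_on (head_pos n w) (gd_chords w)"
  by (rule inj_onI) (metis Pair_inject head_pos_nth)

lemma tail_pos_ne_head_pos:
  "c \<in> gd_chords w \<Longrightarrow> c' \<in> gd_chords w \<Longrightarrow> tail_pos n w c \<noteq> head_pos n w c'"
  using tail_pos_nth head_pos_nth by fastforce

lemma sum_passage_weight_eq_sum_chords:
  assumes "X \<subseteq> {..<length (traversal n w)}"
  shows "(\<Sum>x\<in>X. passage_weight (traversal n w ! x)) =
         (\<Sum>c\<in>gd_chords w. of_bool (head_pos n w c \<in> X) - of_bool (tail_pos n w c \<in> X))"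
proof -
  let ?C = "gd_chords w" and ?f = "\<lambda>x. if x \<in> X then passage_weight (traversal n w ! x) else 0"
  have fin: "finite ?C" by (simp add: gd_chords_def)
  have "(\<Sum>x\<in>X. passage_weight (traversal n w ! x)) = (\<Sum>x<length (traversal n w). ?f x)"
    using sum.inter_restrict[of "{..<length (traversal n w)}" _ X] assms by (simp add: Int_absorb1)
  also have "\<dots> = (\<Sum>x\<in>tail_pos n w ` ?C. ?f x) + (\<Sum>x\<in>head_pos n w ` ?C. ?f x)"
    unfolding passage_positions using fin tail_pos_ne_head_pos by (intro sum.union_disjoint) auto
  also have "\<dots> = (\<Sum>c\<in>?C. - of_bool (tail_pos n w c \<in> X)) +
                    (\<Sum>c\<in>?C. of_bool (head_pos n w c \<in> X))"
    by (simp add: sum.reindex[OF inj_on_tail_pos] sum.reindex[OF inj_on_head_pos])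
      (intro arg_cong2[where f = "(+)"] sum.cong refl; simp add: tail_pos_nth head_pos_nth)
  finally show ?thesis by (simp add: sum_subtractf sum_negf)
qed

(* All chords are positive, so a chord with both ends on one arc contributes nothing
   and i(c) counts heads minus tails on the arc from the tail of c to its head. *)
lemma gd_index_eq_sum_arc:
  assumes c: "c \<in> gd_chords w"
  shows "gd_index n w c =
         (\<Sum>x\<in>arc (length (traversal n w)) (tail_pos n w c) (head_pos n w c).
            passage_weight (traversal n w ! x))"
proof -
  define N where "N = length (traversal n w)"
  define g1 where "g1 = arc N (tail_pos n w c) (head_pos n w c)"
  define g2 where "g2 = arc N (head_pos n w c) (tail_pos n w c)"
  define h :: "nat \<Rightarrow> int"
    where "h c' = of_bool (head_pos n w c' \<in> g1) - of_bool (tail_pos n w c' \<in> g1)" for c'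
  have fin: "finite (gd_chords w)" by (simp add: gd_chords_def)
  have g2_iff: "x \<in> g2 \<longleftrightarrow> x \<notin> g1" if "c' \<in> gd_chords w - {c}"
    and "x = tail_pos n w c' \<or> x = head_pos n w c'" for c' x
  proof -
    from that(1) have c': "c' \<in> gd_chords w" "c' \<noteq> c" by auto
    have "x < N" using that(2) tail_pos_nth[OF c'(1)] head_pos_nth[OF c'(1)] by (auto simp: N_def)
    moreover have "x \<noteq> tail_pos n w c" "x \<noteq> head_pos n w c"
      using that(2) c c'
      by (auto simp: inj_on_eq_iff[OF inj_on_tail_pos] inj_on_eq_iff[OF inj_on_head_pos]
          tail_pos_ne_head_pos tail_pos_ne_head_pos[THEN not_sym])
    ultimately show ?thesis
      unfolding g1_def g2_def by (intro mem_arc_swap_iff tail_pos_ne_head_pos[OF c c])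
  qed
  have "gd_index n w c = (\<Sum>c'\<in>gd_chords w - {c}. h c')"
    unfolding gd_index_def Let_def N_def[symmetric] g1_def[symmetric] g2_def[symmetric]
  proof (rule sum.mono_neutral_cong_left)
    show "\<forall>c'\<in>gd_chords w - {c} - {c' \<in> gd_chords w - {c}.
              tail_pos n w c' \<in> g1 \<and> head_pos n w c' \<in> g2 \<or>
              tail_pos n w c' \<in> g2 \<and> head_pos n w c' \<in> g1}. h c' = 0"
      using g2_iff by (auto simp: h_def)
  qed (use fin g2_iff crossing_sign_chord in \<open>auto simp: h_def\<close>)
  also have "\<dots> = (\<Sum>c'\<in>gd_chords w. h c')"
    using sum.remove[OF fin c, of h] endpoints_notin_arc by (simp add: h_def g1_def)
  also have "\<dots> = (\<Sum>x\<in>g1. passage_weight (traversal n w ! x))"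
    unfolding h_def using sum_passage_weight_eq_sum_chords[of g1] arc_subset by (simp add: g1_def N_def)
  finally show ?thesis by (simp add: g1_def N_def)
qed

end

subsection \<open>Closures beginning with a virtual block\<close>

locale virtual_block_closure =
  fixes n :: nat and u :: "letter list"
  assumes classical: "\<forall>l\<in>set u. is_Cl l"
    and braid_word: "is_braid_word n u"
    and connected: "one_component n (map Vi [1..<n] @ u)"
    and positive: "0 < n"
begin

abbreviation word :: "letter list" where
  "word \<equiv> map Vi [1..<n] @ u"

abbreviation start :: "nat \<Rightarrow> nat" where
  "start r \<equiv> (braid_perm word ^^ r) 1"

abbreviation pass :: "nat \<Rightarrow> (nat \<times> bool) list" where
  "pass r \<equiv> pass_ev word 0 (start r)"

abbreviation shift :: "nat \<Rightarrow> nat" where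
  "shift \<equiv> fold step (map Vi [1..<n])"

lemma is_braid_word_word: "is_braid_word n word"
  using braid_word by (auto simp: is_braid_word_def)

lemma shift_one: "shift 1 = n"
  using fold_step_Vi[of 1 n 1] positive by simp

lemma shift_other: "2 \<le> p \<Longrightarrow> p \<le> n \<Longrightarrow> shift p = p - 1"
  using fold_step_Vi[of 1 n p] by simp

lemma start_in_range: "start r \<in> {1..n}"
  using fold_step_in_range[OF is_braid_word_word] positive
  by (induction r) (auto simp: braid_perm_def)

lemma start_ne_one: "0 < r \<Longrightarrow> r < n \<Longrightarrow> start r \<noteq> 1"
  using bij_betw_strand_start[OF is_braid_word_word connected positive] positive
  by (auto dest!: bij_betw_imp_inj_on dest: inj_onD[of _ _ r 0])

lemma traversal_eq: "traversal n word = concat (map pass [0..<n])"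
  by (simp add: traversal_def)

lemma pass_eq: "pass r = pass_ev u (n - 1) (shift (start r))"
  using pass_ev_Vi_append[of "[1..<n]" u 0] by simp

lemma sum_passage_weight_pass:
  "sum_list (map passage_weight (pass r)) = int (shift (start r)) - int (start (Suc r))"
  using sum_passage_weight_pass_ev[OF classical] pass_ev_Vi_append[of "[1..<n]" u 0]
  by (simp add: braid_perm_def)

lemma sum_passage_weight_first_passes:
  "r < n \<Longrightarrow> sum_list (map passage_weight (concat (map pass [0..<r]))) =
             int n - int r - int (shift (start r))"
proof (induction r)
  case 0
  then show ?case using shift_one by simp
next
  case (Suc r)
  have "shift (start (Suc r)) = start (Suc r) - 1" "2 \<le> start (Suc r)"
    using start_ne_one[of "Suc r"] start_in_range[of "Suc r"] Suc.prems shift_other by auto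
  with Suc sum_passage_weight_pass[of r] show ?case by simp
qed

lemma sum_passage_weight_traversal: "sum_list (map passage_weight (traversal n word)) = 0"
proof -
  have "[0..<n] = [0..<n - 1] @ [n - 1]" "Suc (n - 1) = n" using positive by (cases n; simp)+
  moreover have "start n = 1" by (rule funpow_braid_perm_closes[OF is_braid_word_word connected positive])
  ultimately show ?thesis
    using sum_passage_weight_first_passes[of "n - 1"] sum_passage_weight_pass[of "n - 1"] positive
    unfolding traversal_eq by simp
qed

lemma sum_passage_weight_take_traversal:
  assumes x: "x < length (traversal n word)" and e: "traversal n word ! x = (t, b)"
  obtains r where "r < n" "(t, b) \<in> set (pass r)"
    "sum_list (map passage_weight (take x (traversal n word))) =
     int n - int r - (int (lpos (word ! t)) + (if b then 0 else 1))"
proof -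
  have "x < length (concat (map pass [0..<n]))" using x unfolding traversal_eq .
  from nth_concat_split[OF this] obtain r y where
    "r < length (map pass [0..<n])" "y < length (map pass [0..<n] ! r)"
    "concat (map pass [0..<n]) ! x = map pass [0..<n] ! r ! y"
    "take x (concat (map pass [0..<n])) =
     concat (take r (map pass [0..<n])) @ take y (map pass [0..<n] ! r)"
    by blast
  with e have ry: "r < n" "y < length (pass r)" "pass r ! y = (t, b)"
    "take x (traversal n word) = concat (map pass [0..<r]) @ take y (pass r)"
    unfolding traversal_eq by (simp_all add: take_map)
  have "(t, b) \<in> set (pass r)" using nth_mem[OF ry(2)] ry(3) by simp
  then have "(t, b) \<in> set (pass_ev u (n - 1) (shift (start r)))" unfolding pass_eq .
  then have "word ! t = u ! (t - (n - 1))" by (simp add: set_pass_ev nth_append)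
  moreover have "sum_list (map passage_weight (take y (pass r))) =
    int (shift (start r)) - (int (lpos (u ! (t - (n - 1)))) + (if b then 0 else 1))"
    using ry(2,3) unfolding pass_eq by (rule sum_passage_weight_take_pass_ev[OF classical])
  ultimately show ?thesis
    using that[of r] ry \<open>(t, b) \<in> set (pass r)\<close> sum_passage_weight_first_passes[OF ry(1)] by simp
qed

lemma gd_index_ne_zero:
  assumes c: "c \<in> gd_chords word"
  shows "gd_index n word c \<noteq> 0"
proof -
  let ?T = "traversal n word"
  let ?F = "\<lambda>x. sum_list (map passage_weight (take x ?T))"
  note distinct = distinct_traversal[OF is_braid_word_word connected positive]
  note events = set_traversal[OF is_braid_word_word connected positive]
  define tc where "tc = tail_pos n word c"
  define hc where "hc = head_pos n word c"
  have tc: "tc < length ?T" "?T ! tc = (c, True)"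
    using tail_pos_nth[OF distinct events c] by (simp_all add: tc_def)
  have hc: "hc < length ?T" "?T ! hc = (c, False)"
    using head_pos_nth[OF distinct events c] by (simp_all add: hc_def)
  obtain a where a: "a < n" "(c, True) \<in> set (pass a)"
    "?F tc = int n - int a - (int (lpos (word ! c)) + (if True then 0 else 1))"
    by (rule sum_passage_weight_take_traversal[OF tc])
  obtain b where b: "b < n" "(c, False) \<in> set (pass b)"
    "?F hc = int n - int b - (int (lpos (word ! c)) + (if False then 0 else 1))"
    by (rule sum_passage_weight_take_traversal[OF hc])
  have "a \<noteq> b"
  proof
    assume "a = b"
    with a(2) b(2) show False by (simp add: set_pass_ev)
  qed
  have "gd_index n word c = (\<Sum>x\<in>arc (length ?T) tc hc. map passage_weight ?T ! x)"
    unfolding gd_index_eq_sum_arc[OF distinct events c] tc_def[symmetric] hc_def[symmetric]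
    using arc_subset[of "length ?T" tc hc] by (intro sum.cong) auto
  also have "\<dots> = ?F hc - ?F (Suc tc)"
    using sum_arc_eq_prefix_sums[of tc "map passage_weight ?T" hc] tc hc
      tail_pos_ne_head_pos[OF distinct events c c] sum_passage_weight_traversal
    by (simp add: tc_def hc_def take_map)
  also have "?F (Suc tc) = ?F tc - 1" using tc by (simp add: take_Suc_conv_app_nth)
  finally show ?thesis using a(3) b(3) \<open>a \<noteq> b\<close> by simp
qed

end

theorem lemma4p5:
  fixes i j k :: nat
  assumes "j > 0" and "k < i"
    and "one_component i (ijk_word i j k)"
  shows "\<forall>c \<in> gd_chords (ijk_word i j k). gd_index i (ijk_word i j k) c \<noteq> 0"
proof -
  let ?u = "concat (replicate (j - 1) (map Cl [1..<i])) @ map Cl (rev [1..<k + 1])"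
  have word: "ijk_word i j k = map Vi [1..<i] @ ?u" by (simp add: ijk_word_def VB1_def Bk_def)
  interpret virtual_block_closure i ?u
    by unfold_locales (use assms word in \<open>auto simp: is_braid_word_def\<close>)
  show ?thesis using gd_index_ne_zero unfolding word by blast
qed

end
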